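(* Let $X_1,\dots,X_n$ be real numbers (or random variables), $\epsilon\in(0,1/2)$, and let $X_1^\epsilon,\dots,X_n^\epsilon$ satisfy $\#\{i\in[n]:X_i^\epsilon\neq X_i\}\leq\epsilon n$. Let $k_1,k_2\in\mathbb{N}$ satisfy $\min\{k_1,k_2\}\geq\lfloor\epsilon n\rfloor$ and $k_1+k_2<n$. Then \[\overline{X}_{n,k_1-\lfloor\epsilon n\rfloor,\,k_2+\lfloor\epsilon n\rfloor}\leq\overline{X^\epsilon}_{n,k_1,k_2}\leq\overline{X}_{n,k_1+\lfloor\epsilon n\rfloor,\,k_2-\lfloor\epsilon n\rfloor}.\]
   Context: For integers $k_1,k_2\geq0$ with $k_1+k_2<n$ and order statistics $X_{(1)}\le\dots\le X_{(n)}$, the $(k_1,k_2)$-trimmed mean is $\overline{X}_{n,k_1,k_2}:=\frac{1}{n-k_1-k_2}\sum_{i=k_1+1}^{n-k_2}X_{(i)}$; $\overline{X^\epsilon}_{n,k_1,k_2}$ is defined in the same way from the order statistics $X^\epsilon_{(1)}\le\dots\le X^\epsilon_{(n)}$ of $X^\epsilon_1,\dots,X^\epsilon_n$. *)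

theory Defs
  imports Complex_Main
begin

text \<open>Order statistics of X_1..X_n (indexed here by 0..n-1): the i-th order statistic
  X_(i) (1-based) is the (i-1)-th entry of the sorted list.\<close>
definition order_stat :: "nat \<Rightarrow> (nat \<Rightarrow> real) \<Rightarrow> nat \<Rightarrow> real" where
  "order_stat n X i = sort (map X [0..<n]) ! (i - 1)"

definition trimmed_mean :: "nat \<Rightarrow> (nat \<Rightarrow> real) \<Rightarrow> nat \<Rightarrow> nat \<Rightarrow> real" where
  "trimmed_mean n X k1 k2 =
     (\<Sum>i = k1 + 1..n - k2. order_stat n X i) / real (n - k1 - k2)"

end

theory Submission
  imports Defs
begin

text \<open>Changing at most \<open>m\<close> sample points moves each order statistic by at most
  \<open>m\<close> ranks: \<open>X_(i-m) \<le> Y_(i)\<close>. Indeed, at least \<open>i\<close> of the values of \<open>Y\<close> are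
  \<open>\<le> Y_(i)\<close>, and at least \<open>i - m\<close> of them are unchanged values of \<open>X\<close>; were
  \<open>Y_(i) < X_(i-m)\<close>, these would be \<open>i - m\<close> values of \<open>X\<close> below its \<open>(i-m)\<close>-th smallest.
  Summing over the untrimmed ranks gives the lower bound with \<open>m = \<lfloor>\<epsilon>n\<rfloor>\<close>; the upper
  bound is the same statement with the roles of \<open>X\<close> and \<open>X\<^sup>\<epsilon>\<close> exchanged.\<close>

lemma sorted_length_filter_le_nth:
  fixes s :: "'a::linorder list"
  assumes "sorted s" "j < length s"
  shows "Suc j \<le> length (filter (\<lambda>x. x \<le> s ! j) s)"
proof -
  have "{0..j} \<subseteq> {i. i < length s \<and> s ! i \<le> s ! j}"
    using assms by (auto intro: sorted_nth_mono)
  from card_mono[OF _ this] show ?thesis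
    by (simp add: length_filter_conv_card)
qed

lemma sorted_length_filter_less_nth:
  fixes s :: "'a::linorder list"
  assumes "sorted s" "j < length s"
  shows "length (filter (\<lambda>x. x < s ! j) s) \<le> j"
proof -
  have "{i. i < length s \<and> s ! i < s ! j} \<subseteq> {0..<j}"
    using assms by (auto simp: not_less[symmetric] dest: sorted_nth_mono[of s j])
  from card_mono[OF _ this] show ?thesis
    by (simp add: length_filter_conv_card)
qed

lemma length_filter_sort_map_upt:
  "length (filter P (sort (map X [0..<n]))) = card {k \<in> {0..<n}. P (X k)}"
proof -
  have "length (filter P (sort (map X [0..<n]))) = length (filter (P \<circ> X) [0..<n])"
    by (simp add: filter_sort filter_map)
  also have "\<dots> = card {k \<in> {0..<n}. P (X k)}"
    by (subst distinct_card[symmetric]) (auto intro: arg_cong[where f = card])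
  finally show ?thesis .
qed

lemma order_stat_le_of_few_changes:
  fixes X Y :: "nat \<Rightarrow> real"
  assumes changes: "card {i \<in> {0..<n}. Y i \<noteq> X i} \<le> m" and i: "m < i" "i \<le> n"
  shows "order_stat n X (i - m) \<le> order_stat n Y i"
proof (rule ccontr)
  define sX where "sX = sort (map X [0..<n])"
  define sY where "sY = sort (map Y [0..<n])"
  define j where "j = i - 1"
  have rank: "m \<le> j" "j < n" "i - m - 1 = j - m"
    using i by (auto simp: j_def)
  assume "\<not> ?thesis"
  then have below: "sY ! j < sX ! (j - m)"
    by (simp add: order_stat_def sX_def sY_def j_def rank(3))
  define low_Y where "low_Y = {k \<in> {0..<n}. Y k \<le> sY ! j}"
  define low_X where "low_X = {k \<in> {0..<n}. X k < sX ! (j - m)}"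
  define changed where "changed = {k \<in> {0..<n}. Y k \<noteq> X k}"
  have "Suc j \<le> card low_Y"
    using sorted_length_filter_le_nth[of sY j] rank
    by (simp add: sY_def low_Y_def length_filter_sort_map_upt)
  moreover have "card low_X \<le> j - m"
    using sorted_length_filter_less_nth[of sX "j - m"] rank
    by (simp add: sX_def low_X_def length_filter_sort_map_upt)
  moreover have "low_Y - changed \<subseteq> low_X"
    using below by (auto simp: low_Y_def low_X_def changed_def)
  then have "card (low_Y - changed) \<le> card low_X"
    by (rule card_mono[rotated]) (simp add: low_X_def)
  moreover have "card low_Y - card changed \<le> card (low_Y - changed)"
    by (intro diff_card_le_card_Diff) (auto simp: changed_def)
  ultimately show False
    using changes rank by (simp add: changed_def)
qed

lemma trimmed_mean_le_of_few_changes: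
  fixes X Y :: "nat \<Rightarrow> real"
  assumes "card {i \<in> {0..<n}. Y i \<noteq> X i} \<le> m" and "m \<le> k1" "k1 + k2 < n"
  shows "trimmed_mean n X (k1 - m) (k2 + m) \<le> trimmed_mean n Y k1 k2"
proof -
  have "(\<Sum>i = k1 - m + 1..n - (k2 + m). order_stat n X i)
      = (\<Sum>i = (k1 - m + 1) + m..(n - (k2 + m)) + m. order_stat n X (i - m))"
    by (subst sum.shift_bounds_cl_nat_ivl) simp
  also have "\<dots> = (\<Sum>i = k1 + 1..n - k2. order_stat n X (i - m))"
    using assms by (intro sum.cong) auto
  also have "\<dots> \<le> (\<Sum>i = k1 + 1..n - k2. order_stat n Y i)"
    using assms by (intro sum_mono order_stat_le_of_few_changes) auto
  finally show ?thesis
    using assms by (simp add: trimmed_mean_def divide_right_mono)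
qed

theorem proposition3p6:
  fixes X Xeps :: "nat \<Rightarrow> real" and n k1 k2 :: nat and \<epsilon> :: real
  assumes "0 < \<epsilon>" and "\<epsilon> < 1/2"
    and "real (card {i \<in> {0..<n}. Xeps i \<noteq> X i}) \<le> \<epsilon> * real n"
    and "min k1 k2 \<ge> nat \<lfloor>\<epsilon> * real n\<rfloor>"
    and "k1 + k2 < n"
  shows "trimmed_mean n X (k1 - nat \<lfloor>\<epsilon> * real n\<rfloor>) (k2 + nat \<lfloor>\<epsilon> * real n\<rfloor>)
           \<le> trimmed_mean n Xeps k1 k2
       \<and> trimmed_mean n Xeps k1 k2
           \<le> trimmed_mean n X (k1 + nat \<lfloor>\<epsilon> * real n\<rfloor>) (k2 - nat \<lfloor>\<epsilon> * real n\<rfloor>)"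
proof -
  define m where "m = nat \<lfloor>\<epsilon> * real n\<rfloor>"
  have "int (card {i \<in> {0..<n}. Xeps i \<noteq> X i}) \<le> \<lfloor>\<epsilon> * real n\<rfloor>"
    using assms(3) by (simp add: le_floor_iff)
  then have changes: "card {i \<in> {0..<n}. Xeps i \<noteq> X i} \<le> m"
    unfolding m_def by linarith
  then have changes': "card {i \<in> {0..<n}. X i \<noteq> Xeps i} \<le> m"
    by (metis (mono_tags, lifting) Collect_cong)
  have m: "m \<le> k1" "m \<le> k2"
    using assms(4) by (simp_all add: m_def)
  have "trimmed_mean n X (k1 - m) (k2 + m) \<le> trimmed_mean n Xeps k1 k2"
    using changes m(1) assms(5) by (rule trimmed_mean_le_of_few_changes)
  moreover have "trimmed_mean n Xeps (k1 + m - m) (k2 - m + m) \<le> trimmed_mean n X (k1 + m) (k2 - m)"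
    using m assms(5) by (intro trimmed_mean_le_of_few_changes[OF changes']) simp_all
  ultimately show ?thesis
    using m unfolding m_def by simp
qed

end
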